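(* Assume that every loss function takes values in $[0,1]$, i.e., $0 \leq f_t(\mathbf{w}) \leq 1$ for all $\mathbf{w}\in \Omega$ and all rounds $t$. Then for any interval $J=[i,j] \in \mathcal{I}$, AOA satisfies \[ \sum_{t=i}^j f_t(\mathbf{w}_t) - \sum_{t=i}^j f_t(\mathbf{w}_{t,J}) \leq \sqrt{3 |J| c'(j) } \] where \[ c'(j) \leq 1+ \ln m'(j) + \ln\frac{5+ 3 \ln(1+j)}{2} \leq 1+ \ln j + \ln(1+ \log_2 j) + \ln\frac{5+ 3 \ln(1+j)}{2} . \]
   Context: Online convex optimization: in each round $t$ the learner picks $\mathbf{w}_t$ from a convex set $\Omega$ and then suffers loss $f_t(\mathbf{w}_t)$ for a convex function $f_t$. The geometric covering (GC) intervals are $\mathcal{I}=\bigcup_{k \in \mathbb{N}\cup\{0\}} \mathcal{I}_k$ with $\mathcal{I}_k=\{[i\cdot 2^k,(i+1)\cdot 2^k-1]: i\in\mathbb{N}\}$. The algorithm AOA (Adaptive Online learning based on Ader) creates, for each GC interval $I$ at its starting round, an expert $E_I$ running an instance of Ader (a dynamic-regret algorithm combining OGD instances with various step sizes via Hedge) with horizon $|I|$; the expert is active exactly during $I$ and outputs $\mathbf{w}_{t,I}$ at round $t\in I$. AOA combines active experts with AdaNormalHedge: with potential $\Phi(R,C)=\exp([R]_+^2/(3C))$ ($\Phi(0,0)=1$) and weight function $w(R,C)=\frac12(\Phi(R+1,C+1)-\Phi(R-1,C+1))$, each active expert gets weight $p_{t,I}\propto w(R_{t-1,I},C_{t-1,I})$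 where $R_{t-1,I}=\sum_{u=\min I}^{t-1}(f_u(\mathbf{w}_u)-f_u(\mathbf{w}_{u,I}))$ and $C_{t-1,I}=\sum_{u=\min I}^{t-1}|f_u(\mathbf{w}_u)-f_u(\mathbf{w}_{u,I})|$, and AOA outputs $\mathbf{w}_t=\sum_{I} p_{t,I}\mathbf{w}_{t,I}$ (sum over active experts). $m'(t)$ denotes the total number of experts created up to round $t$, which satisfies $m'(t)\leq t(1+\log_2 t)$. *)

theory Defs
  imports "HOL-Analysis.Analysis"
begin

text \<open>Geometric covering intervals [a,b], represented by the pair (a,b) of their
  first and last round: [i*2^k, (i+1)*2^k - 1] with i >= 1, k >= 0.\<close>
definition GC :: "(nat \<times> nat) set" where
  "GC = {(i * 2 ^ k, (i + 1) * 2 ^ k - 1) | i k. 1 \<le> i}"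

definition active :: "nat \<Rightarrow> (nat \<times> nat) set" where
  "active t = {I \<in> GC. fst I \<le> t \<and> t \<le> snd I}"

definition m' :: "nat \<Rightarrow> nat" where
  "m' t = card {I \<in> GC. fst I \<le> t}"

text \<open>AdaNormalHedge potential; for C = 0 the division yields 0, so Phi 0 0 = 1.\<close>
definition Phi :: "real \<Rightarrow> real \<Rightarrow> real" where
  "Phi R C = exp ((max R 0)\<^sup>2 / (3 * C))"

definition anh_weight :: "real \<Rightarrow> real \<Rightarrow> real" where
  "anh_weight R C = (Phi (R + 1) (C + 1) - Phi (R - 1) (C + 1)) / 2"

definition regR :: "(nat \<Rightarrow> 'a \<Rightarrow> real) \<Rightarrow> (nat \<Rightarrow> 'a) \<Rightarrow> (nat \<times> nat \<Rightarrow> nat \<Rightarrow> 'a)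
    \<Rightarrow> nat \<times> nat \<Rightarrow> nat \<Rightarrow> real" where
  "regR f h wexp I t = (\<Sum>u\<in>{fst I..<t}. f u (h u) - f u (wexp I u))"

definition regC :: "(nat \<Rightarrow> 'a \<Rightarrow> real) \<Rightarrow> (nat \<Rightarrow> 'a) \<Rightarrow> (nat \<times> nat \<Rightarrow> nat \<Rightarrow> 'a)
    \<Rightarrow> nat \<times> nat \<Rightarrow> nat \<Rightarrow> real" where
  "regC f h wexp I t = (\<Sum>u\<in>{fst I..<t}. \<bar>f u (h u) - f u (wexp I u)\<bar>)"

text \<open>One AOA round t, given the learner's past predictions h (used only at rounds < t).\<close>
definition aoa_step :: "(nat \<Rightarrow> 'a \<Rightarrow> real) \<Rightarrow> (nat \<times> nat \<Rightarrow> nat \<Rightarrow> 'a::real_vector)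
    \<Rightarrow> (nat \<Rightarrow> 'a) \<Rightarrow> nat \<Rightarrow> 'a" where
  "aoa_step f wexp h t =
     (let W = (\<lambda>I. anh_weight (regR f h wexp I t) (regC f h wexp I t));
          Z = (\<Sum>I\<in>active t. W I)
      in (\<Sum>I\<in>active t. (W I / Z) *\<^sub>R wexp I t))"

primrec aoa_hist :: "(nat \<Rightarrow> 'a \<Rightarrow> real) \<Rightarrow> (nat \<times> nat \<Rightarrow> nat \<Rightarrow> 'a::real_vector)
    \<Rightarrow> nat \<Rightarrow> nat \<Rightarrow> 'a" where
  "aoa_hist f wexp 0 = (\<lambda>_. 0)"
| "aoa_hist f wexp (Suc t) =
     (aoa_hist f wexp t)(Suc t := aoa_step f wexp (aoa_hist f wexp t) (Suc t))"

text \<open>AOA's prediction w_t at round t >= 1.\<close>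
definition aoa :: "(nat \<Rightarrow> 'a \<Rightarrow> real) \<Rightarrow> (nat \<times> nat \<Rightarrow> nat \<Rightarrow> 'a::real_vector)
    \<Rightarrow> nat \<Rightarrow> 'a" where
  "aoa f wexp t = aoa_hist f wexp t t"

end

theory Submission
  imports Defs
begin

(* With Psi(R, C) = Phi(R, C) - 4 ln(1 + C)
   (here anh_potential), joint convexity of Phi in (R, C) and the bound 4 / (C + 1) on its
   second difference in R give
     Psi(R + r, C + |r|) <= Psi(R, C) + w(R, C) r     for |r| <= 1 and |R| <= C.
   As the losses are convex, Jensen's inequality makes the w-weighted sum of the instantaneous
   regrets of the active experts nonpositive in every round, so the total potential of the experts
   created up to round T never exceeds their number m'(T), each starting at Psi(0, 0) = 1.
   Hence Phi(R_J, C_J) <= m'(j) (1 + 4 ln(1 + j)), and C_J <= |J| turns this into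
   R_J^2 <= 3 |J| c'(j). Finally m'(j) <= j (1 + log_2 j): an interval created by round j has
   one of j starting points and one of 1 + log_2 j lengths. *)

section \<open>Exponential inequalities\<close>

lemma two_power_mult_fact_le_fact_double: "2 ^ n * fact n \<le> (fact (2 * n) :: nat)"
proof (induction n)
  case 0
  then show ?case by simp
next
  case (Suc n)
  have "2 ^ Suc n * fact (Suc n) = 2 * Suc n * (2 ^ n * fact n)"
    by (simp add: algebra_simps)
  also have "\<dots> \<le> (2 * n + 2) * (2 * n + 1) * fact (2 * n)"
    using Suc.IH by (intro mult_mono) auto
  also have "\<dots> = fact (2 * Suc n)"
    by (simp add: algebra_simps)
  finally show ?case .
qed

lemma cosh_le_exp_half_square: "cosh x \<le> exp (x\<^sup>2 / 2)" for x :: real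
proof (rule sums_le)
  let ?c = "\<lambda>n. if even n then x ^ n /\<^sub>R fact n else 0"
  have "(\<lambda>n. ?c (2 * n)) sums cosh x"
  proof (subst sums_mono_reindex)
    show "strict_mono (\<lambda>n::nat. 2 * n)"
      by (rule strict_monoI) simp
    show "?c n = 0" if "n \<notin> range (\<lambda>n. 2 * n)" for n
      using that by (auto elim!: evenE)
    show "?c sums cosh x"
      by (rule cosh_converges)
  qed
  then show "(\<lambda>n. x ^ (2 * n) /\<^sub>R fact (2 * n)) sums cosh x"
    by simp
  show "(\<lambda>n. (x\<^sup>2 / 2) ^ n /\<^sub>R fact n) sums exp (x\<^sup>2 / 2)"
    by (rule exp_converges)
  fix n
  have "2 ^ n * fact n \<le> (fact (2 * n) :: real)"
    using of_nat_mono[OF two_power_mult_fact_le_fact_double[of n]] by simp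
  then have "(x\<^sup>2) ^ n / fact (2 * n) \<le> (x\<^sup>2) ^ n / (2 ^ n * fact n)"
    by (intro divide_left_mono) auto
  moreover have "x ^ (2 * n) /\<^sub>R fact (2 * n) = (x\<^sup>2) ^ n / fact (2 * n)"
    by (simp add: power_mult divide_inverse_commute)
  moreover have "(x\<^sup>2 / 2) ^ n /\<^sub>R fact n = (x\<^sup>2) ^ n / (2 ^ n * fact n)"
    by (simp add: power_divide field_simps)
  ultimately show "x ^ (2 * n) /\<^sub>R fact (2 * n) \<le> (x\<^sup>2 / 2) ^ n /\<^sub>R fact n"
    by simp
qed

lemma exp_minus_one_le: "exp x - 1 \<le> x * exp x" for x :: real
proof -
  have "(1 - x) * exp x \<le> exp (- x) * exp x"
    using exp_minus_ge[of x] by (intro mult_right_mono) auto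
  then show ?thesis
    by (simp add: exp_minus algebra_simps)
qed

lemma exp_three_halves_le: "exp (3 / 2 :: real) \<le> 6"
proof -
  have "exp (3 / 2 :: real) = exp 1 * exp (1 / 2)"
    by (simp flip: exp_add)
  also have "\<dots> \<le> 3 * 2"
    using e_less_272 exp_half_le2 by (intro mult_mono) auto
  finally show ?thesis
    by simp
qed

lemma exp_one_ge_eight_thirds: "8 / 3 \<le> exp (1 :: real)"
  using e_approx_32 unfolding abs_le_iff by (simp add: inverse_eq_divide)

lemma ln_increment_ge:
  fixes C x :: real
  assumes "0 \<le> C" "0 \<le> x" "x \<le> 1"
  shows "x / (C + 1) \<le> 2 * (ln (1 + (C + x)) - ln (1 + C))"
proof -
  have "x * x \<le> x + C * x"
    using assms mult_left_le[of x x] mult_nonneg_nonneg[of C x] by linarith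
  then have "x / (C + 1) \<le> 2 * (x / (1 + (C + x)))"
    using assms by (simp add: field_simps)
  also have "x / (1 + (C + x)) \<le> ln (1 + (C + x)) - ln (1 + C)"
  proof -
    have "ln ((1 + C) / (1 + (C + x))) \<le> (1 + C) / (1 + (C + x)) - 1"
      using assms by (intro ln_le_minus_one) auto
    then show ?thesis
      using assms by (simp add: ln_div field_simps)
  qed
  finally show ?thesis
    by simp
qed


section \<open>The AdaNormalHedge potential\<close>

lemma Phi_ge_one: "0 \<le> C \<Longrightarrow> 1 \<le> Phi R C"
  unfolding Phi_def by simp

lemma Phi_mono:
  assumes "R \<le> R'" "0 \<le> C"
  shows "Phi R C \<le> Phi R' C"
proof -
  have "(max R 0)\<^sup>2 \<le> (max R' 0)\<^sup>2"
    using assms(1) by (intro power_mono) auto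
  then show ?thesis
    unfolding Phi_def using assms(2) by (simp add: divide_right_mono)
qed

lemma Phi_eq_1_of_nonpos: "R \<le> 0 \<Longrightarrow> Phi R C = 1"
  unfolding Phi_def by simp

lemma anh_weight_nonneg: "0 \<le> C \<Longrightarrow> 0 \<le> anh_weight R C"
  unfolding anh_weight_def using Phi_mono[of "R - 1" "R + 1" "C + 1"] by simp

lemma anh_weight_0_0_pos: "0 < anh_weight 0 0"
  unfolding anh_weight_def Phi_def by simp

lemma quad_over_lin_convex:
  fixes s p1 p2 y1 y2 :: real
  assumes s: "0 < s" "s < 1" and y: "0 \<le> y1" "0 \<le> y2"
    and p: "y1 = 0 \<Longrightarrow> p1 = 0" "y2 = 0 \<Longrightarrow> p2 = 0"
  shows "((1 - s) * p1 + s * p2)\<^sup>2 / ((1 - s) * y1 + s * y2) \<le> (1 - s) * (p1\<^sup>2 / y1) + s * (p2\<^sup>2 / y2)"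
proof (cases "y1 = 0 \<or> y2 = 0")
  case True
  with s p show ?thesis
    by (auto simp: power2_eq_square ac_simps)
next
  case False
  with y have y_pos: "0 < y1" "0 < y2"
    by auto
  have "((1 - s) * p1\<^sup>2 * y2 + s * p2\<^sup>2 * y1) * ((1 - s) * y1 + s * y2)
      - ((1 - s) * p1 + s * p2)\<^sup>2 * (y1 * y2) = (1 - s) * s * (p1 * y2 - p2 * y1)\<^sup>2"
    by (simp add: power2_eq_square algebra_simps)
  moreover have "0 \<le> (1 - s) * s * (p1 * y2 - p2 * y1)\<^sup>2"
    using s by simp
  ultimately have "((1 - s) * p1 + s * p2)\<^sup>2 * (y1 * y2)
      \<le> ((1 - s) * p1\<^sup>2 * y2 + s * p2\<^sup>2 * y1) * ((1 - s) * y1 + s * y2)"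
    by linarith
  moreover have "0 < (1 - s) * y1 + s * y2"
    using s y_pos by (intro add_pos_pos) auto
  ultimately show ?thesis
    using y_pos by (simp add: field_simps)
qed

(* Since x / 0 = 0, Phi R 0 = 1 for every R: the points (R, 0) with R > 0 must be excluded. *)
lemma convex_Phi_domain: "convex {(R :: real, C :: real). 0 < C \<or> (C = 0 \<and> R \<le> 0)}"
proof (rule convexI)
  fix x y :: "real \<times> real" and u v :: real
  assume x: "x \<in> {(R, C). 0 < C \<or> (C = 0 \<and> R \<le> 0)}" and y: "y \<in> {(R, C). 0 < C \<or> (C = 0 \<and> R \<le> 0)}"
    and uv: "0 \<le> u" "0 \<le> v" "u + v = 1"
  obtain R1 C1 R2 C2 where xy: "x = (R1, C1)" "y = (R2, C2)"
    by fastforce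
  consider "u = 0" | "v = 0" | "0 < u" "0 < v"
    using uv by linarith
  then show "u *\<^sub>R x + v *\<^sub>R y \<in> {(R, C). 0 < C \<or> (C = 0 \<and> R \<le> 0)}"
  proof cases
    case 3
    have C: "0 \<le> C1" "0 \<le> C2" "C1 = 0 \<Longrightarrow> R1 \<le> 0" "C2 = 0 \<Longrightarrow> R2 \<le> 0"
      using x y unfolding xy by auto
    show ?thesis
    proof (cases "C1 = 0 \<and> C2 = 0")
      case True
      then have "u * R1 + v * R2 \<le> 0"
        using C 3 by (intro add_nonpos_nonpos mult_nonneg_nonpos) auto
      then show ?thesis
        using True unfolding xy by simp
    next
      case False
      then have "0 < u * C1 + v * C2"
        using C 3 by (auto intro: add_pos_nonneg add_nonneg_pos)
      then show ?thesis
        unfolding xy by simp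
    qed
  qed (use x y uv in auto)
qed

lemma convex_on_Phi: "convex_on {(R, C). 0 < C \<or> (C = 0 \<and> R \<le> 0)} (\<lambda>(R, C). Phi R C)"
proof (rule convex_onI[OF _ convex_Phi_domain])
  fix t :: real and x y :: "real \<times> real"
  assume t: "0 < t" "t < 1"
    and x: "x \<in> {(R, C). 0 < C \<or> (C = 0 \<and> R \<le> 0)}" and y: "y \<in> {(R, C). 0 < C \<or> (C = 0 \<and> R \<le> 0)}"
  obtain R1 C1 R2 C2 where xy: "x = (R1, C1)" "y = (R2, C2)"
    by fastforce
  define p1 p2 where "p1 = max R1 0" and "p2 = max R2 0"
  have C: "0 \<le> C1" "0 \<le> C2" "C1 = 0 \<Longrightarrow> p1 = 0" "C2 = 0 \<Longrightarrow> p2 = 0"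
    using x y unfolding xy p1_def p2_def by auto
  define C where "C = (1 - t) * C1 + t * C2"
  define m where "m = (1 - t) * p1 + t * p2"
  have "0 \<le> C"
    unfolding C_def using C t by simp
  have "max ((1 - t) * R1 + t * R2) 0 \<le> m"
    unfolding m_def p1_def p2_def using t by (auto intro!: add_mono mult_left_mono)
  then have "(max ((1 - t) * R1 + t * R2) 0)\<^sup>2 / (3 * C) \<le> m\<^sup>2 / (3 * C)"
    using \<open>0 \<le> C\<close> by (intro divide_right_mono power_mono) auto
  also have "\<dots> = (m\<^sup>2 / C) / 3"
    by simp
  also have "\<dots> \<le> ((1 - t) * (p1\<^sup>2 / C1) + t * (p2\<^sup>2 / C2)) / 3"
    unfolding m_def C_def using t C by (intro divide_right_mono quad_over_lin_convex) auto
  also have "\<dots> = (1 - t) * (p1\<^sup>2 / (3 * C1)) + t * (p2\<^sup>2 / (3 * C2))"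
    by (simp add: add_divide_distrib mult.commute)
  finally have "Phi ((1 - t) * R1 + t * R2) C
      \<le> exp ((1 - t) * (p1\<^sup>2 / (3 * C1)) + t * (p2\<^sup>2 / (3 * C2)))"
    unfolding Phi_def by simp
  also have "\<dots> \<le> (1 - t) * Phi R1 C1 + t * Phi R2 C2"
    using convex_onD[OF exp_convex, of t "p1\<^sup>2 / (3 * C1)" "p2\<^sup>2 / (3 * C2)"] t
    unfolding Phi_def p1_def p2_def by simp
  finally show "(\<lambda>(R, C). Phi R C) ((1 - t) *\<^sub>R x + t *\<^sub>R y)
      \<le> (1 - t) * (\<lambda>(R, C). Phi R C) x + t * (\<lambda>(R, C). Phi R C) y"
    unfolding xy C_def by simp
qed

lemma Phi_second_difference_le_small:
  assumes "0 \<le> C" "\<bar>R\<bar> \<le> C" "R < 1"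
  shows "Phi (R + 1) (C + 1) + Phi (R - 1) (C + 1) - 2 * Phi R C \<le> 4 / (C + 1)"
proof -
  define p where "p = max (R + 1) 0"
  define z where "z = p\<^sup>2 / (3 * (C + 1))"
  have p: "0 \<le> p" "p \<le> 2" "p \<le> C + 1"
    unfolding p_def using assms by auto
  then have "p\<^sup>2 \<le> 2 * (C + 1)"
    using mult_mono[of p 2 p "C + 1"] by (simp add: power2_eq_square)
  then have z: "0 \<le> z" "z \<le> 1"
    unfolding z_def using assms(1) by (auto simp: field_simps)
  then have "exp z \<le> 3"
    using e_less_272 exp_le_cancel_iff[of z 1] by linarith
  have "exp z - 1 \<le> z * exp z"
    by (rule exp_minus_one_le)
  also have "\<dots> \<le> z * 3"
    using \<open>exp z \<le> 3\<close> z by (intro mult_left_mono)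
  also have "\<dots> = p\<^sup>2 / (C + 1)"
    unfolding z_def using assms(1) by (simp add: field_simps)
  also have "\<dots> \<le> 4 / (C + 1)"
    using power_mono[OF p(2,1), of 2] assms(1) by (intro divide_right_mono) auto
  finally have "exp z - 1 \<le> 4 / (C + 1)" .
  moreover have "Phi (R + 1) (C + 1) = exp z"
    unfolding Phi_def z_def p_def by simp
  ultimately show ?thesis
    using Phi_eq_1_of_nonpos[of "R - 1"] Phi_ge_one[OF assms(1), of R] assms(3) by simp
qed

lemma Phi_second_difference_le_large:
  assumes "1 \<le> R" "R \<le> C"
  shows "Phi (R + 1) (C + 1) + Phi (R - 1) (C + 1) - 2 * Phi R C \<le> 4 / (C + 1)"
proof -
  define c where "c = C + 1"
  define A a x s where "A = R\<^sup>2 / (3 * c)" and "a = 1 / (3 * c)"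
    and "x = 2 * R / (3 * c)" and "s = R\<^sup>2 / (9 * c\<^sup>2)"
  have c: "2 \<le> c"
    unfolding c_def using assms by simp
  have "Phi (R + 1) (C + 1) = exp (A + a + x)" "Phi (R - 1) (C + 1) = exp (A + a - x)"
    unfolding Phi_def A_def a_def x_def c_def using assms
    by (simp_all add: max_absorb1 add_divide_distrib [symmetric] power2_eq_square algebra_simps)
  then have "Phi (R + 1) (C + 1) + Phi (R - 1) (C + 1) = 2 * exp (A + a) * cosh x"
    by (simp add: cosh_def exp_add exp_diff exp_minus field_simps)
  also have "\<dots> \<le> 2 * exp (A + a) * exp (2 * s)"
  proof -
    have "x\<^sup>2 / 2 = 2 * s"
      unfolding x_def s_def by (simp add: field_simps power2_eq_square)
    then show ?thesis
      using cosh_le_exp_half_square[of x] by simp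
  qed
  finally have sum_le: "Phi (R + 1) (C + 1) + Phi (R - 1) (C + 1) \<le> 2 * exp (A + a + 2 * s)"
    by (simp add: exp_add)
  have "A + 3 * s = R\<^sup>2 / 3 * ((c + 1) / c\<^sup>2)"
    unfolding A_def s_def using c by (simp add: field_simps power2_eq_square)
  also have "\<dots> \<le> R\<^sup>2 / 3 * (1 / C)"
  proof (intro mult_left_mono)
    have "C * (c + 1) \<le> c\<^sup>2"
      unfolding c_def by (simp add: power2_eq_square algebra_simps)
    then show "(c + 1) / c\<^sup>2 \<le> 1 / C"
      using assms c by (simp add: field_simps)
  qed simp
  \<comment> \<open>the exponent of Phi R C exceeds A by at least 3 s, which absorbs the cosh factor exp (2 s)\<close>
  finally have "exp (A + 3 * s) \<le> Phi R C"
    unfolding Phi_def using assms(1) by simp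
  moreover have "exp (A + a + 2 * s) - exp (A + 3 * s) \<le> 2 / c"
  proof (cases "a \<le> s")
    case True
    then have "exp (A + a + 2 * s) \<le> exp (A + 3 * s)"
      by simp
    moreover have "0 \<le> 2 / c"
      using c by simp
    ultimately show ?thesis
      by linarith
  next
    case False
    have "A = 3 * c * s"
      unfolding A_def s_def using c by (simp add: field_simps power2_eq_square)
    then have "A < 1"
      using False c unfolding a_def by (simp add: field_simps)
    moreover have "a \<le> 1 / 6"
      unfolding a_def using c by (simp add: field_simps)
    ultimately have "exp (A + 2 * s + a) \<le> exp (3 / 2)"
      using False by simp
    then have exp_le_6: "exp (A + 2 * s + a) \<le> 6"
      using exp_three_halves_le by linarith
    have "0 \<le> s"
      unfolding s_def by simp
    then have "exp (A + 2 * s) \<le> exp (A + 3 * s)"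
      by simp
    then have "exp (A + a + 2 * s) - exp (A + 3 * s) \<le> exp (A + 2 * s) * (exp a - 1)"
      by (simp add: exp_add algebra_simps)
    also have "\<dots> \<le> exp (A + 2 * s) * (a * exp a)"
      by (intro mult_left_mono exp_minus_one_le) simp
    also have "\<dots> = a * exp (A + 2 * s + a)"
      by (simp add: exp_add)
    also have "\<dots> \<le> a * 6"
      using exp_le_6 c unfolding a_def by (intro mult_left_mono) auto
    also have "\<dots> = 2 / c"
      unfolding a_def by simp
    finally show ?thesis .
  qed
  ultimately show ?thesis
    using sum_le unfolding c_def by simp
qed

lemma Phi_second_difference_le:
  assumes "0 \<le> C" "\<bar>R\<bar> \<le> C"
  shows "Phi (R + 1) (C + 1) + Phi (R - 1) (C + 1) - 2 * Phi R C \<le> 4 / (C + 1)"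
proof (cases "R < 1")
  case True
  then show ?thesis
    using Phi_second_difference_le_small assms by blast
next
  case False
  then show ?thesis
    using Phi_second_difference_le_large assms by simp
qed

lemma Phi_step:
  assumes "0 \<le> C" "\<bar>R\<bar> \<le> C" "\<bar>r\<bar> \<le> 1"
  shows "Phi (R + r) (C + \<bar>r\<bar>) \<le> Phi R C + anh_weight R C * r + 2 * \<bar>r\<bar> / (C + 1)"
proof -
  define e :: real where "e = (if 0 \<le> r then 1 else -1)"
  have r_eq: "r = \<bar>r\<bar> * e"
    unfolding e_def by simp
  have "Phi (R + e) (C + 1) - Phi R C \<le> e * anh_weight R C + 2 / (C + 1)"
    using Phi_second_difference_le[OF assms(1,2)] unfolding e_def anh_weight_def
    by (auto simp: field_simps)
  have "(R + \<bar>r\<bar> * e, C + \<bar>r\<bar>) = (1 - \<bar>r\<bar>) *\<^sub>R (R, C) + \<bar>r\<bar> *\<^sub>R (R + e, C + 1)"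
    by (simp add: algebra_simps)
  then have comb: "(R + r, C + \<bar>r\<bar>) = (1 - \<bar>r\<bar>) *\<^sub>R (R, C) + \<bar>r\<bar> *\<^sub>R (R + e, C + 1)"
    by (simp only: r_eq [symmetric])
  have "(\<lambda>(R, C). Phi R C) ((1 - \<bar>r\<bar>) *\<^sub>R (R, C) + \<bar>r\<bar> *\<^sub>R (R + e, C + 1))
      \<le> (1 - \<bar>r\<bar>) * (\<lambda>(R, C). Phi R C) (R, C) + \<bar>r\<bar> * (\<lambda>(R, C). Phi R C) (R + e, C + 1)"
    using assms by (intro convex_onD[OF convex_on_Phi]) auto
  then have "Phi (R + r) (C + \<bar>r\<bar>) \<le> (1 - \<bar>r\<bar>) * Phi R C + \<bar>r\<bar> * Phi (R + e) (C + 1)"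
    by (simp only: comb [symmetric] prod.case)
  also have "\<dots> = Phi R C + \<bar>r\<bar> * (Phi (R + e) (C + 1) - Phi R C)"
    by (simp add: algebra_simps)
  also have "\<dots> \<le> Phi R C + \<bar>r\<bar> * (e * anh_weight R C + 2 / (C + 1))"
    using \<open>Phi (R + e) (C + 1) - Phi R C \<le> _\<close> by (intro add_left_mono mult_left_mono) auto
  also have "\<dots> = Phi R C + anh_weight R C * (\<bar>r\<bar> * e) + 2 * \<bar>r\<bar> / (C + 1)"
    by (simp add: algebra_simps)
  also have "\<dots> = Phi R C + anh_weight R C * r + 2 * \<bar>r\<bar> / (C + 1)"
    by (simp only: r_eq [symmetric])
  finally show ?thesis .
qed

definition anh_potential :: "real \<Rightarrow> real \<Rightarrow> real" where
  "anh_potential R C = Phi R C - 4 * ln (1 + C)"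

lemma anh_potential_0_0 [simp]: "anh_potential 0 0 = 1"
  unfolding anh_potential_def Phi_def by simp

lemma anh_potential_step:
  assumes "0 \<le> C" "\<bar>R\<bar> \<le> C" "\<bar>r\<bar> \<le> 1"
  shows "anh_potential (R + r) (C + \<bar>r\<bar>) \<le> anh_potential R C + anh_weight R C * r"
  using Phi_step[OF assms] ln_increment_ge[of C "\<bar>r\<bar>"] assms
  unfolding anh_potential_def by simp

lemma le_sqrt_if_Phi_le:
  fixes R C n M l :: real
  assumes "\<bar>R\<bar> \<le> C" "C \<le> n" "1 \<le> M" "0 \<le> l" "Phi R C \<le> M * (1 + 4 * l)"
  shows "R \<le> sqrt (3 * n * (1 + ln M + ln ((5 + 3 * l) / 2)))"
proof -
  define L where "L = 1 + ln M + ln ((5 + 3 * l) / 2)"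
  have "0 \<le> L"
    unfolding L_def using assms(3,4) by simp
  show ?thesis
  proof (cases "R \<le> 0")
    case True
    then show ?thesis
      using \<open>0 \<le> L\<close> assms(1,2) unfolding L_def[symmetric] by (simp add: order_trans[OF _ real_sqrt_ge_zero])
  next
    case False
    have "1 + 4 * l \<le> exp 1 * ((5 + 3 * l) / 2)"
      using exp_one_ge_eight_thirds mult_right_mono[OF exp_one_ge_eight_thirds assms(4)]
      by (simp add: algebra_simps)
    have "exp (R\<^sup>2 / (3 * C)) = Phi R C"
      unfolding Phi_def using False by simp
    also have "\<dots> \<le> M * (1 + 4 * l)"
      by (fact assms(5))
    also have "\<dots> \<le> M * (exp 1 * ((5 + 3 * l) / 2))"
      using \<open>1 + 4 * l \<le> _\<close> assms(3) by (intro mult_left_mono) auto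
    also have "\<dots> = exp L"
      unfolding L_def using assms(3,4) by (simp add: exp_add)
    finally have "R\<^sup>2 / (3 * C) \<le> L"
      by simp
    then have "R\<^sup>2 \<le> 3 * C * L"
      using False assms(1) by (simp add: field_simps)
    also have "\<dots> \<le> 3 * n * L"
      using assms(2) \<open>0 \<le> L\<close> by (intro mult_right_mono) auto
    finally show ?thesis
      unfolding L_def by (rule real_le_rsqrt)
  qed
qed


section \<open>Geometric covering intervals and the AOA recursion\<close>

abbreviation created :: "nat \<Rightarrow> (nat \<times> nat) set" where
  "created t \<equiv> {I \<in> GC. fst I \<le> t}"

lemma GC_fst_ge_1: "I \<in> GC \<Longrightarrow> 1 \<le> fst I"
  unfolding GC_def by auto

lemma GC_fst_le_snd:
  assumes "I \<in> GC"
  shows "fst I \<le> snd I"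
proof -
  obtain i k where "fst I = i * 2 ^ k" "snd I = (i + 1) * 2 ^ k - 1"
    using assms unfolding GC_def by auto
  moreover have "i * 2 ^ k + 1 \<le> (i + 1) * (2 :: nat) ^ k"
    by simp
  ultimately show ?thesis
    by linarith
qed

lemma singleton_in_GC: "1 \<le> t \<Longrightarrow> (t, t) \<in> GC"
  unfolding GC_def by (rule CollectI, rule exI[of _ t], rule exI[of _ 0]) simp

lemma created_subset:
  "created t \<subseteq> (\<lambda>(i, k). (i * 2 ^ k, (i + 1) * 2 ^ k - 1)) ` ({1..t} \<times> {k. 2 ^ k \<le> t})"
proof
  fix I
  assume "I \<in> created t"
  then obtain i k where I: "I = (i * 2 ^ k, (i + 1) * 2 ^ k - 1)" "1 \<le> i" "i * 2 ^ k \<le> t"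
    unfolding GC_def by auto
  moreover have "i \<le> t" "2 ^ k \<le> t"
    using I(2,3) order_trans[OF _ I(3)] by auto
  ultimately show "I \<in> (\<lambda>(i, k). (i * 2 ^ k, (i + 1) * 2 ^ k - 1)) ` ({1..t} \<times> {k. 2 ^ k \<le> t})"
    by force
qed

lemma finite_exponents: "finite {k :: nat. 2 ^ k \<le> t}" for t :: nat
  by (rule finite_subset[of _ "{..t}"]) (auto dest: order.strict_trans2[OF less_exp])

lemma finite_created: "finite (created t)"
  using finite_subset[OF created_subset] finite_exponents by blast

lemma card_exponents_le:
  assumes "1 \<le> t"
  shows "real (card {k :: nat. 2 ^ k \<le> t}) \<le> 1 + log 2 (real t)"
proof -
  define n where "n = nat \<lfloor>log 2 (real t)\<rfloor>"
  have "{k :: nat. 2 ^ k \<le> t} \<subseteq> {..n}"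
  proof
    fix k :: nat
    assume "k \<in> {k. 2 ^ k \<le> t}"
    then have "real k \<le> log 2 (real t)"
      using le_log2_of_power by blast
    then have "int k \<le> \<lfloor>log 2 (real t)\<rfloor>"
      by linarith
    then show "k \<in> {..n}"
      unfolding n_def by simp
  qed
  then have "card {k :: nat. 2 ^ k \<le> t} \<le> n + 1"
    using card_mono[of "{..n}"] by fastforce
  moreover have "real n \<le> log 2 (real t)"
    unfolding n_def using assms by simp
  ultimately show ?thesis
    by linarith
qed

lemma m'_le:
  assumes "1 \<le> t"
  shows "real (m' t) \<le> real t * (1 + log 2 (real t))"
proof -
  have "m' t \<le> card ({1..t} \<times> {k :: nat. 2 ^ k \<le> t})"
    unfolding m'_def using finite_exponents
    by (intro card_mono[OF _ created_subset, THEN order_trans] card_image_le) auto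
  also have "\<dots> = t * card {k :: nat. 2 ^ k \<le> t}"
    by (simp add: card_cartesian_product)
  finally have "real (m' t) \<le> real t * real (card {k :: nat. 2 ^ k \<le> t})"
    by (metis of_nat_le_iff of_nat_mult)
  also have "\<dots> \<le> real t * (1 + log 2 (real t))"
    using card_exponents_le[OF assms] by (intro mult_left_mono) auto
  finally show ?thesis .
qed

lemma m'_ge_1:
  assumes "1 \<le> t"
  shows "1 \<le> m' t"
proof -
  have "(1, 1) \<in> created t"
    using singleton_in_GC[of 1] assms by simp
  then show ?thesis
    unfolding m'_def using finite_created by (auto simp: Suc_le_eq card_gt_0_iff)
qed

lemma finite_active: "finite (active t)"
  by (rule finite_subset[OF _ finite_created]) (auto simp: active_def)

lemma aoa_hist_eq_aoa: "1 \<le> u \<Longrightarrow> u \<le> t \<Longrightarrow> aoa_hist f wexp t u = aoa f wexp u"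
  by (induction t) (auto simp: aoa_def le_Suc_eq)

lemma aoa_step_cong:
  assumes "\<And>u. 1 \<le> u \<Longrightarrow> u < t \<Longrightarrow> h u = h' u"
  shows "aoa_step f wexp h t = aoa_step f wexp h' t"
proof -
  have "regR f h wexp I t = regR f h' wexp I t \<and> regC f h wexp I t = regC f h' wexp I t"
    if "I \<in> active t" for I
  proof -
    have "1 \<le> fst I"
      using that GC_fst_ge_1 unfolding active_def by blast
    then show ?thesis
      unfolding regR_def regC_def using assms by (auto intro!: sum.cong)
  qed
  then show ?thesis
    unfolding aoa_step_def Let_def by (intro sum.cong refl) (simp_all cong: sum.cong)
qed

lemma aoa_Suc: "aoa f wexp (Suc t) = aoa_step f wexp (aoa f wexp) (Suc t)"
  unfolding aoa_def by (auto simp: aoa_hist_eq_aoa intro: aoa_step_cong)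


section \<open>Regret of AOA\<close>

locale aoa_setting =
  fixes \<Omega> :: "'a::real_vector set" and f :: "nat \<Rightarrow> 'a \<Rightarrow> real"
    and wexp :: "nat \<times> nat \<Rightarrow> nat \<Rightarrow> 'a"
  assumes convex_domain: "convex \<Omega>"
    and convex_loss: "\<And>t. convex_on \<Omega> (f t)"
    and loss_bounded: "\<And>t w. w \<in> \<Omega> \<Longrightarrow> 0 \<le> f t w \<and> f t w \<le> 1"
    and expert_in_domain: "\<And>I t. I \<in> GC \<Longrightarrow> fst I \<le> t \<Longrightarrow> t \<le> snd I \<Longrightarrow> wexp I t \<in> \<Omega>"
begin

definition inst_regret :: "nat \<times> nat \<Rightarrow> nat \<Rightarrow> real" where
  "inst_regret I u = f u (aoa f wexp u) - f u (wexp I u)"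

definition weight :: "nat \<Rightarrow> nat \<times> nat \<Rightarrow> real" where
  "weight t I = anh_weight (regR f (aoa f wexp) wexp I t) (regC f (aoa f wexp) wexp I t)"

lemma weight_nonneg: "0 \<le> weight t I"
  unfolding weight_def regC_def by (intro anh_weight_nonneg sum_nonneg) auto

lemma sum_weight_pos:
  assumes "1 \<le> t"
  shows "0 < (\<Sum>I\<in>active t. weight t I)"
proof -
  have "(t, t) \<in> active t"
    using singleton_in_GC[OF assms] unfolding active_def by simp
  then have "weight t (t, t) \<le> (\<Sum>I\<in>active t. weight t I)"
    using finite_active weight_nonneg by (intro member_le_sum)
  moreover have "weight t (t, t) = anh_weight 0 0"
    unfolding weight_def regR_def regC_def by simp
  ultimately show ?thesis
    using anh_weight_0_0_pos by simp
qed

lemma aoa_eq_weighted_average: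
  assumes "1 \<le> t"
  shows "aoa f wexp t = (\<Sum>I\<in>active t. (weight t I / (\<Sum>J\<in>active t. weight t J)) *\<^sub>R wexp I t)"
proof -
  obtain T where "t = Suc T"
    using assms by (cases t) auto
  then show ?thesis
    using aoa_Suc[of f wexp T] unfolding aoa_step_def Let_def weight_def by simp
qed

lemma sum_normalized_weight:
  assumes "1 \<le> t"
  shows "(\<Sum>I\<in>active t. weight t I / (\<Sum>J\<in>active t. weight t J)) = 1"
  using sum_weight_pos[OF assms] by (simp flip: sum_divide_distrib)

lemma normalized_weight_nonneg:
  assumes "1 \<le> t"
  shows "0 \<le> weight t I / (\<Sum>J\<in>active t. weight t J)"
  using sum_weight_pos[OF assms] weight_nonneg[of t I] by simp

lemma active_expert_in_domain: "I \<in> active t \<Longrightarrow> wexp I t \<in> \<Omega>"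
  using expert_in_domain unfolding active_def by blast

lemma aoa_in_domain: "1 \<le> t \<Longrightarrow> aoa f wexp t \<in> \<Omega>"
  unfolding aoa_eq_weighted_average
  by (rule convex_sum[OF finite_active convex_domain])
    (simp_all add: sum_normalized_weight normalized_weight_nonneg active_expert_in_domain)

lemma weighted_inst_regret_nonpos:
  assumes "1 \<le> t"
  shows "(\<Sum>I\<in>active t. weight t I * inst_regret I t) \<le> 0"
proof -
  define Z where "Z = (\<Sum>J\<in>active t. weight t J)"
  have "active t \<noteq> {}"
    using singleton_in_GC[OF assms] unfolding active_def by auto
  then have "f t (aoa f wexp t) \<le> (\<Sum>I\<in>active t. (weight t I / Z) * f t (wexp I t))"
    unfolding aoa_eq_weighted_average[OF assms] Z_def using assms
    by (intro convex_on_sum[OF finite_active _ convex_loss])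
      (simp_all add: sum_normalized_weight normalized_weight_nonneg active_expert_in_domain)
  also have "\<dots> = (\<Sum>I\<in>active t. weight t I * f t (wexp I t)) / Z"
    by (simp add: sum_divide_distrib)
  finally have "Z * f t (aoa f wexp t) \<le> (\<Sum>I\<in>active t. weight t I * f t (wexp I t))"
    using sum_weight_pos[OF assms] unfolding Z_def[symmetric] by (simp add: pos_le_divide_eq mult.commute)
  then show ?thesis
    unfolding inst_regret_def Z_def by (simp add: right_diff_distrib sum_subtractf sum_distrib_right)
qed

lemma abs_inst_regret_le_1:
  assumes "I \<in> GC" "fst I \<le> u" "u \<le> snd I"
  shows "\<bar>inst_regret I u\<bar> \<le> 1"
proof -
  have "aoa f wexp u \<in> \<Omega>" "wexp I u \<in> \<Omega>"
    using assms GC_fst_ge_1[OF assms(1)] by (auto intro: aoa_in_domain expert_in_domain)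
  then show ?thesis
    unfolding inst_regret_def using loss_bounded by (smt (verit))
qed

(* cum_regret I T sums over the rounds of I up to T inclusive, whereas regR ... I t sums over
   the rounds before t. *)
definition cum_regret :: "nat \<times> nat \<Rightarrow> nat \<Rightarrow> real" where
  "cum_regret I T = (\<Sum>u\<in>{fst I..min T (snd I)}. inst_regret I u)"

definition cum_abs_regret :: "nat \<times> nat \<Rightarrow> nat \<Rightarrow> real" where
  "cum_abs_regret I T = (\<Sum>u\<in>{fst I..min T (snd I)}. \<bar>inst_regret I u\<bar>)"

definition potential :: "nat \<Rightarrow> real" where
  "potential T = (\<Sum>I\<in>created T. anh_potential (cum_regret I T) (cum_abs_regret I T))"

lemma cum_abs_regret_nonneg: "0 \<le> cum_abs_regret I T"
  unfolding cum_abs_regret_def by (intro sum_nonneg) auto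

lemma abs_cum_regret_le: "\<bar>cum_regret I T\<bar> \<le> cum_abs_regret I T"
  unfolding cum_regret_def cum_abs_regret_def by (rule sum_abs)

lemma cum_abs_regret_le_card:
  assumes "I \<in> GC"
  shows "cum_abs_regret I T \<le> real (card {fst I..min T (snd I)})"
  using sum_bounded_above[of "{fst I..min T (snd I)}" "\<lambda>u. \<bar>inst_regret I u\<bar>" 1]
    abs_inst_regret_le_1[OF assms] unfolding cum_abs_regret_def by simp

lemma anh_potential_Suc_le:
  assumes "I \<in> GC" "fst I \<le> Suc T"
  shows "anh_potential (cum_regret I (Suc T)) (cum_abs_regret I (Suc T))
    \<le> anh_potential (cum_regret I T) (cum_abs_regret I T)
      + (if I \<in> active (Suc T) then weight (Suc T) I * inst_regret I (Suc T) else 0)"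
proof (cases "I \<in> active (Suc T)")
  case True
  then have "Suc T \<le> snd I"
    unfolding active_def by simp
  then have "{fst I..min (Suc T) (snd I)} = insert (Suc T) {fst I..min T (snd I)}"
    "{fst I..min T (snd I)} = {fst I..<Suc T}"
    using assms(2) by auto
  then have "cum_regret I (Suc T) = cum_regret I T + inst_regret I (Suc T)"
    "cum_abs_regret I (Suc T) = cum_abs_regret I T + \<bar>inst_regret I (Suc T)\<bar>"
    "weight (Suc T) I = anh_weight (cum_regret I T) (cum_abs_regret I T)"
    unfolding cum_regret_def cum_abs_regret_def weight_def regR_def regC_def inst_regret_def
    by simp_all
  moreover have "\<bar>inst_regret I (Suc T)\<bar> \<le> 1"
    using abs_inst_regret_le_1 assms \<open>Suc T \<le> snd I\<close> by blast
  ultimately show ?thesis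
    using True anh_potential_step[OF cum_abs_regret_nonneg abs_cum_regret_le] by simp
next
  case False
  then have "min (Suc T) (snd I) = min T (snd I)"
    using assms unfolding active_def by auto
  then show ?thesis
    using False unfolding cum_regret_def cum_abs_regret_def by simp
qed

lemma potential_Suc_le: "potential (Suc T) \<le> potential T + real (card {I \<in> GC. fst I = Suc T})"
proof -
  define new where "new = {I \<in> GC. fst I = Suc T}"
  have created_Suc: "created (Suc T) = created T \<union> new" "created T \<inter> new = {}"
    unfolding new_def by auto
  have "finite new"
    using finite_created[of "Suc T"] unfolding created_Suc by simp
  have "potential (Suc T)
      \<le> (\<Sum>I\<in>created (Suc T). anh_potential (cum_regret I T) (cum_abs_regret I T))
        + (\<Sum>I\<in>created (Suc T). if I \<in> active (Suc T) then weight (Suc T) I * inst_regret I (Suc T) else 0)"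
    unfolding potential_def sum.distrib[symmetric] by (intro sum_mono anh_potential_Suc_le) auto
  also have "(\<Sum>I\<in>created (Suc T). if I \<in> active (Suc T) then weight (Suc T) I * inst_regret I (Suc T) else 0)
      = (\<Sum>I\<in>active (Suc T). weight (Suc T) I * inst_regret I (Suc T))"
    by (subst sum.inter_restrict[OF finite_created, symmetric])
      (auto simp: active_def intro!: sum.cong)
  also have "\<dots> \<le> 0"
    by (rule weighted_inst_regret_nonpos) simp
  also have "(\<Sum>I\<in>created (Suc T). anh_potential (cum_regret I T) (cum_abs_regret I T))
      = potential T + (\<Sum>I\<in>new. anh_potential (cum_regret I T) (cum_abs_regret I T))"
    unfolding potential_def created_Suc(1) using finite_created \<open>finite new\<close> created_Suc(2)
    by (rule sum.union_disjoint)
  also have "(\<Sum>I\<in>new. anh_potential (cum_regret I T) (cum_abs_regret I T)) = real (card new)"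
    unfolding new_def cum_regret_def cum_abs_regret_def by simp
  finally show ?thesis
    unfolding new_def by simp
qed

lemma potential_le_m': "potential T \<le> real (m' T)"
proof (induction T)
  case 0
  have "created 0 = {}"
    using GC_fst_ge_1 by fastforce
  then show ?case
    unfolding potential_def m'_def by (simp only:) simp
next
  case (Suc T)
  have "created (Suc T) = created T \<union> {I \<in> GC. fst I = Suc T}"
    "created T \<inter> {I \<in> GC. fst I = Suc T} = {}"
    by auto
  then have "m' (Suc T) = m' T + card {I \<in> GC. fst I = Suc T}"
    unfolding m'_def using finite_created[of "Suc T"] by (simp add: card_Un_disjoint)
  then show ?case
    using potential_Suc_le[of T] Suc.IH by simp
qed

lemma Phi_le_m'_mult:
  assumes "I \<in> created T"
  shows "Phi (cum_regret I T) (cum_abs_regret I T) \<le> real (m' T) * (1 + 4 * ln (1 + real T))"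
proof -
  have C_le: "cum_abs_regret I' T \<le> real T" if "I' \<in> created T" for I'
  proof -
    have "card {fst I'..min T (snd I')} \<le> T"
      using GC_fst_ge_1[of I'] that by simp
    then show ?thesis
      using cum_abs_regret_le_card[of I' T] that by simp
  qed
  have "Phi (cum_regret I T) (cum_abs_regret I T)
      \<le> (\<Sum>I'\<in>created T. Phi (cum_regret I' T) (cum_abs_regret I' T))"
    using assms finite_created Phi_ge_one[OF cum_abs_regret_nonneg]
    by (intro member_le_sum) (auto intro: order_trans[OF zero_le_one])
  also have "\<dots> = potential T + (\<Sum>I'\<in>created T. 4 * ln (1 + cum_abs_regret I' T))"
    unfolding potential_def anh_potential_def by (simp add: sum_subtractf)
  also have "\<dots> \<le> real (m' T) + (\<Sum>I'\<in>created T. 4 * ln (1 + real T))"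
  proof (intro add_mono sum_mono)
    show "potential T \<le> real (m' T)"
      by (rule potential_le_m')
    show "4 * ln (1 + cum_abs_regret I' T) \<le> 4 * ln (1 + real T)" if "I' \<in> created T" for I'
      using C_le[OF that] cum_abs_regret_nonneg[of I' T] by simp
  qed
  also have "\<dots> = real (m' T) * (1 + 4 * ln (1 + real T))"
    unfolding m'_def by (simp add: algebra_simps)
  finally show ?thesis .
qed

lemma regret_le:
  assumes "(i, j) \<in> GC"
  shows "(\<Sum>t=i..j. f t (aoa f wexp t)) - (\<Sum>t=i..j. f t (wexp (i, j) t))
    \<le> sqrt (3 * real (j - i + 1) * (1 + ln (real (m' j)) + ln ((5 + 3 * ln (1 + real j)) / 2)))"
proof -
  have "i \<le> j" "1 \<le> i"
    using GC_fst_le_snd[OF assms] GC_fst_ge_1[OF assms] by simp_all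
  have "(\<Sum>t=i..j. f t (aoa f wexp t)) - (\<Sum>t=i..j. f t (wexp (i, j) t)) = cum_regret (i, j) j"
    unfolding cum_regret_def inst_regret_def by (simp add: sum_subtractf)
  also have "\<dots> \<le> sqrt (3 * real (j - i + 1) * (1 + ln (real (m' j)) + ln ((5 + 3 * ln (1 + real j)) / 2)))"
  proof (rule le_sqrt_if_Phi_le[OF abs_cum_regret_le])
    show "cum_abs_regret (i, j) j \<le> real (j - i + 1)"
      using cum_abs_regret_le_card[OF assms, of j] \<open>i \<le> j\<close> by simp
    show "1 \<le> real (m' j)"
      using m'_ge_1[of j] \<open>1 \<le> i\<close> \<open>i \<le> j\<close> by simp
    show "0 \<le> ln (1 + real j)"
      by simp
    show "Phi (cum_regret (i, j) j) (cum_abs_regret (i, j) j) \<le> real (m' j) * (1 + 4 * ln (1 + real j))"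
      using assms \<open>i \<le> j\<close> by (intro Phi_le_m'_mult) simp
  qed
  finally show ?thesis .
qed

end

theorem lemma8:
  fixes \<Omega> :: "'a::real_vector set"
    and f :: "nat \<Rightarrow> 'a \<Rightarrow> real"
    and wexp :: "nat \<times> nat \<Rightarrow> nat \<Rightarrow> 'a"
    and i j :: nat
  assumes "convex \<Omega>"
    and "\<And>t. convex_on \<Omega> (f t)"
    and "\<And>t w. w \<in> \<Omega> \<Longrightarrow> 0 \<le> f t w \<and> f t w \<le> 1"
    and "\<And>I t. I \<in> GC \<Longrightarrow> fst I \<le> t \<Longrightarrow> t \<le> snd I \<Longrightarrow> wexp I t \<in> \<Omega>"
    and "(i, j) \<in> GC"
  shows "(\<Sum>t=i..j. f t (aoa f wexp t)) - (\<Sum>t=i..j. f t (wexp (i, j) t))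
           \<le> sqrt (3 * real (j - i + 1)
                 * (1 + ln (real (m' j)) + ln ((5 + 3 * ln (1 + real j)) / 2)))
       \<and> 1 + ln (real (m' j)) + ln ((5 + 3 * ln (1 + real j)) / 2)
           \<le> 1 + ln (real j) + ln (1 + log 2 (real j)) + ln ((5 + 3 * ln (1 + real j)) / 2)"
proof
  interpret aoa_setting \<Omega> f wexp
    using assms(1-4) by unfold_locales
  show "(\<Sum>t=i..j. f t (aoa f wexp t)) - (\<Sum>t=i..j. f t (wexp (i, j) t))
           \<le> sqrt (3 * real (j - i + 1)
                 * (1 + ln (real (m' j)) + ln ((5 + 3 * ln (1 + real j)) / 2)))"
    using assms(5) by (rule regret_le)
next
  have "1 \<le> j"
    using GC_fst_ge_1[OF assms(5)] GC_fst_le_snd[OF assms(5)] by simp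
  then have "ln (real (m' j)) \<le> ln (real j * (1 + log 2 (real j)))"
    using m'_le[of j] m'_ge_1[of j] by (subst ln_le_cancel_iff) auto
  also have "\<dots> = ln (real j) + ln (1 + log 2 (real j))"
    using \<open>1 \<le> j\<close> by (intro ln_mult_pos) (auto intro: add_pos_nonneg)
  finally show "1 + ln (real (m' j)) + ln ((5 + 3 * ln (1 + real j)) / 2)
           \<le> 1 + ln (real j) + ln (1 + log 2 (real j)) + ln ((5 + 3 * ln (1 + real j)) / 2)"
    by simp
qed

end
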